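(* Let $G$ be an innately transitive permutation group on a finite set $\Omega$ with plinth $M$, let $\omega\in\Omega$ and $\mathcal E\in\mathrm{CD}(G)$. Then $M_{(\mathcal E)}=M$, the Cartesian system $\mathcal K_\omega(\mathcal E)$ is invariant under conjugation by $G_\omega$, and the actions of $G_\omega$ on $\mathcal K_\omega(\mathcal E)$ (by conjugation) and on $\mathcal E$ are permutationally equivalent.
   Context: A permutation group is innately transitive if it has a transitive minimal normal subgroup, called a plinth. A Cartesian decomposition of $\Omega$ is a set $\mathcal E=\{\Gamma_1,\dots,\Gamma_\ell\}$, $\ell\ge 2$, of partitions of $\Omega$ with $|\gamma_1\cap\cdots\cap\gamma_\ell|=1$ for all $\gamma_i\in\Gamma_i$; $\mathrm{CD}(G)$ is the set of $G$-invariant ones; $M_{(\mathcal E)}$ is the subgroup of $M$ fixing each partition in $\mathcal E$. If $M_{(\mathcal E)}=M$ and $\omega\in\Omega$, then $\mathcal K_\omega(\mathcal E)=\{M_{\gamma_1},\dots,M_{\gamma_\ell}\}$ where $\gamma_i$ is the block of $\Gamma_i$ containing $\omega$ and $M_{\gamma_i}$ is its setwise stabiliser; this is a Cartesian system of $M$ with respect to $\omega$, meaning $\bigcap_i K_i=M_\omega$ and $K_i(\bigcap_{j\ne i}K_j)=M$ for all $i$. *)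

theory Defs
  imports "HOL-Algebra.Algebra" "HOL-Library.Disjoint_Sets"
begin

definition perm_group :: "'a set \<Rightarrow> ('a \<Rightarrow> 'a) set \<Rightarrow> bool" where
  "perm_group \<Omega> G \<longleftrightarrow> subgroup G (BijGroup \<Omega>)"

definition transitive_on :: "'a set \<Rightarrow> ('a \<Rightarrow> 'a) set \<Rightarrow> bool" where
  "transitive_on \<Omega> H \<longleftrightarrow> (\<forall>\<alpha>\<in>\<Omega>. \<forall>\<beta>\<in>\<Omega>. \<exists>h\<in>H. h \<alpha> = \<beta>)"

definition minimal_normal :: "'a set \<Rightarrow> ('a \<Rightarrow> 'a) set \<Rightarrow> ('a \<Rightarrow> 'a) set \<Rightarrow> bool" where
  "minimal_normal \<Omega> G M \<longleftrightarrow>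
     M \<lhd> (BijGroup \<Omega>)\<lparr>carrier := G\<rparr> \<and> M \<noteq> {\<one>\<^bsub>BijGroup \<Omega>\<^esub>} \<and>
     (\<forall>N. N \<lhd> (BijGroup \<Omega>)\<lparr>carrier := G\<rparr> \<and> N \<subseteq> M \<longrightarrow>
          N = {\<one>\<^bsub>BijGroup \<Omega>\<^esub>} \<or> N = M)"

definition innately_transitive_plinth :: "'a set \<Rightarrow> ('a \<Rightarrow> 'a) set \<Rightarrow> ('a \<Rightarrow> 'a) set \<Rightarrow> bool" where
  "innately_transitive_plinth \<Omega> G M \<longleftrightarrow>
     perm_group \<Omega> G \<and> minimal_normal \<Omega> G M \<and> transitive_on \<Omega> M"

definition part_img :: "('a \<Rightarrow> 'a) \<Rightarrow> 'a set set \<Rightarrow> 'a set set" where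
  "part_img g \<Gamma> = (\<lambda>\<gamma>. g ` \<gamma>) ` \<Gamma>"

definition cart_decomp :: "'a set \<Rightarrow> 'a set set set \<Rightarrow> bool" where
  "cart_decomp \<Omega> E \<longleftrightarrow> card E \<ge> 2 \<and> (\<forall>\<Gamma>\<in>E. partition_on \<Omega> \<Gamma>) \<and>
     (\<forall>f. (\<forall>\<Gamma>\<in>E. f \<Gamma> \<in> \<Gamma>) \<longrightarrow> card (\<Inter>\<Gamma>\<in>E. f \<Gamma>) = 1)"

definition CD :: "'a set \<Rightarrow> ('a \<Rightarrow> 'a) set \<Rightarrow> 'a set set set set" where
  "CD \<Omega> G = {E. cart_decomp \<Omega> E \<and> (\<forall>g\<in>G. part_img g ` E = E)}"

definition cd_kernel :: "('a \<Rightarrow> 'a) set \<Rightarrow> 'a set set set \<Rightarrow> ('a \<Rightarrow> 'a) set" where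
  "cd_kernel M E = {m\<in>M. \<forall>\<Gamma>\<in>E. part_img m \<Gamma> = \<Gamma>}"

definition point_stab :: "('a \<Rightarrow> 'a) set \<Rightarrow> 'a \<Rightarrow> ('a \<Rightarrow> 'a) set" where
  "point_stab H \<omega> = {h\<in>H. h \<omega> = \<omega>}"

definition set_stab :: "('a \<Rightarrow> 'a) set \<Rightarrow> 'a set \<Rightarrow> ('a \<Rightarrow> 'a) set" where
  "set_stab H \<gamma> = {h\<in>H. h ` \<gamma> = \<gamma>}"

definition block_of :: "'a set set \<Rightarrow> 'a \<Rightarrow> 'a set" where
  "block_of \<Gamma> \<omega> = (THE \<gamma>. \<gamma> \<in> \<Gamma> \<and> \<omega> \<in> \<gamma>)"

definition cart_system :: "('a \<Rightarrow> 'a) set \<Rightarrow> 'a \<Rightarrow> 'a set set set \<Rightarrow> ('a \<Rightarrow> 'a) set set" where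
  "cart_system M \<omega> E = (\<lambda>\<Gamma>. set_stab M (block_of \<Gamma> \<omega>)) ` E"

(* conjugation g K g^-1 inside BijGroup \<Omega> (left action, matching g acting on partitions) *)
definition conj_set :: "'a set \<Rightarrow> ('a \<Rightarrow> 'a) \<Rightarrow> ('a \<Rightarrow> 'a) set \<Rightarrow> ('a \<Rightarrow> 'a) set" where
  "conj_set \<Omega> g K = (\<lambda>k. g \<otimes>\<^bsub>BijGroup \<Omega>\<^esub> k \<otimes>\<^bsub>BijGroup \<Omega>\<^esub> inv\<^bsub>BijGroup \<Omega>\<^esub> g) ` K"

end

theory Submission
  imports Defs "HOL-Computational_Algebra.Primes" "HOL-Combinatorics.Permutations"
begin

(* If some element of the plinth M moved a partition \<Gamma>\<^sub>0 in E, the kernel of M on the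
   G-orbit O of \<Gamma>\<^sub>0 would be a normal subgroup of G properly contained in M, hence trivial,
   so |M| divides k! for k = |O|. The k partitions in O all have n = |\<Gamma>\<^sub>0| >= 2 blocks, so
   n^k divides |\<Omega>|, the product of the numbers of blocks of all partitions in E, and |\<Omega>|
   divides |M| because M is transitive. For a prime p dividing n this gives p^k | k!, which is
   impossible. Once M fixes every partition, transitivity recovers each \<Gamma> from the stabiliser
   in M of its block through \<omega>: the block is the orbit of \<omega> under that stabiliser, and \<Gamma>
   consists of the M-images of the block. Conjugating by g in G\<^sub>\<omega> moves the stabiliser
   exactly as g moves the block. *)

section \<open>The p-part of k!\<close>

lemma fact_eq_prime_power_mult:
  fixes p k :: nat
  assumes p: "Factorial_Ring.prime p"
  shows "fact k = p ^ (k div p) * fact (k div p) * (\<Prod>j\<in>{j\<in>{1..k}. \<not> p dvd j}. j)"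
proof -
  have "p > 0" using p prime_gt_0_nat by blast
  have multiples: "{1..k} \<inter> {j. p dvd j} = (*) p ` {1..k div p}"
  proof (intro equalityI subsetI)
    fix j assume j: "j \<in> {1..k} \<inter> {j. p dvd j}"
    then obtain i where i: "j = p * i" by blast
    with j have "1 \<le> i" "i \<le> k div p"
      using \<open>p > 0\<close> by (auto simp: less_eq_div_iff_mult_less_eq ac_simps)
    then show "j \<in> (*) p ` {1..k div p}" unfolding i by (intro imageI) simp
  next
    fix j assume "j \<in> (*) p ` {1..k div p}"
    then obtain i where "j = p * i" "1 \<le> i" "i \<le> k div p" by (elim imageE) auto
    moreover from this have "p * i \<le> k"
      using \<open>p > 0\<close> by (simp add: less_eq_div_iff_mult_less_eq ac_simps)
    ultimately show "j \<in> {1..k} \<inter> {j. p dvd j}" using \<open>p > 0\<close> by simp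
  qed
  have "inj_on ((*) p) {1..k div p}"
    using \<open>p > 0\<close> by (simp add: inj_on_def)
  have "fact k = (\<Prod>j\<in>{1..k} \<inter> {j. p dvd j}. j) * (\<Prod>j\<in>{1..k} - {j. p dvd j}. j)"
    unfolding fact_prod by (simp add: prod.Int_Diff[symmetric])
  also have "(\<Prod>j\<in>{1..k} \<inter> {j. p dvd j}. j) = (\<Prod>i\<in>{1..k div p}. p * i)"
    unfolding multiples using \<open>inj_on ((*) p) {1..k div p}\<close> by (simp add: prod.reindex)
  also have "\<dots> = p ^ (k div p) * fact (k div p)"
    by (simp add: prod.distrib fact_prod)
  also have "{1..k} - {j. p dvd j} = {j\<in>{1..k}. \<not> p dvd j}"
    by blast
  finally show ?thesis .
qed

lemma prime_power_not_dvd_fact: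
  fixes p k :: nat
  assumes p: "Factorial_Ring.prime p" and "0 < k"
  shows "\<not> p ^ k dvd fact k"
  using \<open>0 < k\<close>
proof (induction k rule: less_induct)
  case (less k)
  define q where "q = k div p"
  define r where "r = (\<Prod>j\<in>{j\<in>{1..k}. \<not> p dvd j}. j)"
  have "p > 1" using p prime_gt_1_nat by blast
  have "q < k" using \<open>p > 1\<close> less.prems unfolding q_def by simp
  have "2 * q \<le> p * q" using \<open>p > 1\<close> by simp
  also have "\<dots> \<le> k" unfolding q_def by (rule times_div_less_eq_dividend)
  finally have "2 * q \<le> k" .
  have "\<not> p dvd r" unfolding r_def by (subst prime_dvd_prod_iff[OF _ p]) auto
  then have "coprime (p ^ k) r" using p by (simp add: prime_imp_coprime)
  show ?case
  proof
    assume "p ^ k dvd fact k"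
    then have "p ^ k dvd p ^ q * fact q * r"
      using fact_eq_prime_power_mult[OF p, of k] unfolding q_def r_def by argo
    then have "p ^ k dvd p ^ q * fact q"
      using coprime_dvd_mult_left_iff[OF \<open>coprime (p ^ k) r\<close>] by blast
    moreover have "p ^ k = p ^ q * p ^ (k - q)" using \<open>q < k\<close> by (simp flip: power_add)
    ultimately have "p ^ q * p ^ (k - q) dvd p ^ q * fact q" by metis
    then have "p ^ (k - q) dvd fact q" using \<open>p > 1\<close> by (simp add: dvd_mult_cancel_left)
    show False
    proof (cases "q = 0")
      case True
      then have "p ^ k = 1" using \<open>p ^ (k - q) dvd fact q\<close> by simp
      then show False using \<open>p > 1\<close> less.prems by (simp add: power_eq_1_iff)
    next
      case False
      have "p ^ q dvd p ^ (k - q)" using \<open>2 * q \<le> k\<close> by (simp add: le_imp_power_dvd)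
      then show False using less.IH[OF \<open>q < k\<close>] False \<open>p ^ (k - q) dvd fact q\<close> dvd_trans by blast
    qed
  qed
qed

section \<open>Permutation groups and their actions\<close>

lemma carrier_BijGroup [simp]: "carrier (BijGroup S) = Bij S"
  by (simp add: BijGroup_def)

lemma Bij_image_subset: "f \<in> Bij S \<Longrightarrow> A \<subseteq> S \<Longrightarrow> f ` A \<subseteq> S"
  using Bij_imp_funcset by fastforce

lemma BijGroup_mult_image:
  assumes "f \<in> Bij S" "g \<in> Bij S" "A \<subseteq> S"
  shows "(f \<otimes>\<^bsub>BijGroup S\<^esub> g) ` A = f ` g ` A"
  using assms by (force simp: BijGroup_def compose_def)

lemma BijGroup_one_image: "A \<subseteq> S \<Longrightarrow> \<one>\<^bsub>BijGroup S\<^esub> ` A = A"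
  by (auto simp: BijGroup_def)

lemma BijGroup_conj_image:
  assumes g: "g \<in> Bij S" and k: "k \<in> Bij S" and A: "A \<subseteq> S"
  shows "(g \<otimes>\<^bsub>BijGroup S\<^esub> k \<otimes>\<^bsub>BijGroup S\<^esub> inv\<^bsub>BijGroup S\<^esub> g) ` g ` A = g ` k ` A"
proof -
  interpret B: group "BijGroup S" by (rule group_BijGroup)
  have gA: "g ` A \<subseteq> S" using g A by (rule Bij_image_subset)
  have inv_g: "inv\<^bsub>BijGroup S\<^esub> g \<in> Bij S" using g B.inv_closed by simp
  have gk: "g \<otimes>\<^bsub>BijGroup S\<^esub> k \<in> Bij S" using g k B.m_closed by simp
  have "(g \<otimes>\<^bsub>BijGroup S\<^esub> k \<otimes>\<^bsub>BijGroup S\<^esub> inv\<^bsub>BijGroup S\<^esub> g) ` g ` A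
      = (g \<otimes>\<^bsub>BijGroup S\<^esub> k) ` (inv\<^bsub>BijGroup S\<^esub> g) ` g ` A"
    by (rule BijGroup_mult_image[OF gk inv_g gA])
  also have "(inv\<^bsub>BijGroup S\<^esub> g) ` g ` A = (inv\<^bsub>BijGroup S\<^esub> g \<otimes>\<^bsub>BijGroup S\<^esub> g) ` A"
    by (rule BijGroup_mult_image[OF inv_g g A, symmetric])
  also have "\<dots> = A" using g BijGroup_one_image[OF A] by simp
  also have "(g \<otimes>\<^bsub>BijGroup S\<^esub> k) ` A = g ` k ` A"
    by (rule BijGroup_mult_image[OF g k A])
  finally show ?thesis .
qed

lemma card_Bij:
  assumes "finite S"
  shows "card (Bij S) = fact (card S)"
proof -
  have "inj_on (\<lambda>p. restrict p S) {p. p permutes S}"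
  proof (rule inj_onI, rule ext)
    fix p q x assume "p \<in> {p. p permutes S}" "q \<in> {p. p permutes S}" "restrict p S = restrict q S"
    then show "p x = q x"
      by (cases "x \<in> S") (auto simp: permutes_not_in dest: fun_cong[where x = x])
  qed
  moreover have "(\<lambda>p. restrict p S) ` {p. p permutes S} = Bij S"
  proof (intro equalityI subsetI)
    fix f assume "f \<in> (\<lambda>p. restrict p S) ` {p. p permutes S}"
    then show "f \<in> Bij S" by (auto simp: Bij_def permutes_imp_bij)
  next
    fix f assume f: "f \<in> Bij S"
    define p where "p x = (if x \<in> S then f x else x)" for x
    have "p permutes S"
      using f by (intro bij_imp_permutes) (auto simp: p_def Bij_def cong: bij_betw_cong)
    moreover have "restrict p S = f"
      using f by (auto simp: p_def Bij_def extensional_def)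
    ultimately show "f \<in> (\<lambda>p. restrict p S) ` {p. p permutes S}" by blast
  qed
  ultimately show ?thesis
    using card_image card_permutations[OF refl assms] by metis
qed

lemma group_actionI:
  fixes H :: "('g, 'm) monoid_scheme" and Y :: "'x set" and act :: "'g \<Rightarrow> 'x \<Rightarrow> 'x"
  assumes "group H"
    and act_closed: "\<And>h x. h \<in> carrier H \<Longrightarrow> x \<in> Y \<Longrightarrow> act h x \<in> Y"
    and act_mult: "\<And>h k x. h \<in> carrier H \<Longrightarrow> k \<in> carrier H \<Longrightarrow> x \<in> Y \<Longrightarrow>
                act (h \<otimes>\<^bsub>H\<^esub> k) x = act h (act k x)"
    and act_one: "\<And>x. x \<in> Y \<Longrightarrow> act \<one>\<^bsub>H\<^esub> x = x"
  shows "group_action H Y (\<lambda>h. restrict (act h) Y)"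
proof -
  interpret H: group H by fact
  have Bij: "restrict (act h) Y \<in> Bij Y" if h: "h \<in> carrier H" for h
  proof -
    have "act (inv\<^bsub>H\<^esub> h) (act h x) = x" "act h (act (inv\<^bsub>H\<^esub> h) x) = x" if "x \<in> Y" for x
      using h that by (simp_all flip: act_mult add: act_one)
    then have "bij_betw (act h) Y Y"
      using h act_closed by (intro bij_betw_byWitness[where f' = "act (inv\<^bsub>H\<^esub> h)"]) auto
    then show ?thesis by (simp add: Bij_def)
  qed
  have "restrict (act (h \<otimes>\<^bsub>H\<^esub> k)) Y = restrict (act h) Y \<otimes>\<^bsub>BijGroup Y\<^esub> restrict (act k) Y"
    if "h \<in> carrier H" "k \<in> carrier H" for h k
    using that Bij act_closed by (auto simp: BijGroup_def compose_def act_mult)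
  then show ?thesis
    using Bij \<open>group H\<close> group_BijGroup by (auto simp: group_action_def group_hom_def group_hom_axioms_def hom_def)
qed

lemma (in group_action) card_dvd_fact_card_if_inj:
  assumes "finite E" and "subgroup K G" and "inj_on \<phi> K"
  shows "card K dvd fact (card E)"
proof -
  interpret group_hom G "BijGroup E" \<phi> by (rule group_hom)
  have "subgroup (\<phi> ` K) (BijGroup E)"
    using subgroup_img_is_subgroup[OF assms(2)] .
  then have "card (\<phi> ` K) dvd order (BijGroup E)"
    using group.lagrange[OF group_BijGroup] by (metis dvd_triv_right)
  then show ?thesis
    using card_image[OF assms(3)] card_Bij[OF assms(1)] by (simp add: order_def)
qed

lemma card_dvd_card_if_transitive:
  assumes "subgroup M (BijGroup \<Omega>)" and "transitive_on \<Omega> M" and "\<Omega> \<noteq> {}"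
  shows "card \<Omega> dvd card M"
proof -
  interpret B: group "BijGroup \<Omega>" by (rule group_BijGroup)
  interpret M: group_action "BijGroup \<Omega>\<lparr>carrier := M\<rparr>" \<Omega> id
    using B.canonical_inj_is_hom[OF assms(1)] by (simp add: group_action_def)
  obtain \<omega> where "\<omega> \<in> \<Omega>" using assms(3) by blast
  have "orbit (BijGroup \<Omega>\<lparr>carrier := M\<rparr>) id \<omega> = \<Omega>"
    using assms(2) \<open>\<omega> \<in> \<Omega>\<close> M.element_image
    by (fastforce simp: orbit_def transitive_on_def)
  then have "card \<Omega> * card (stabilizer (BijGroup \<Omega>\<lparr>carrier := M\<rparr>) id \<omega>) = card M"
    using M.orbit_stabilizer_theorem[OF \<open>\<omega> \<in> \<Omega>\<close>] by (simp add: order_def)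
  then show ?thesis by (metis dvd_triv_left)
qed

lemma minimal_normal_action_trivial_or_faithful:
  assumes min: "minimal_normal \<Omega> G M" and act: "group_action (BijGroup \<Omega>\<lparr>carrier := G\<rparr>) Y \<phi>"
  shows "(\<forall>m\<in>M. \<phi> m = \<one>\<^bsub>BijGroup Y\<^esub>) \<or> inj_on \<phi> M"
proof -
  let ?G = "BijGroup \<Omega>\<lparr>carrier := G\<rparr>"
  let ?K = "kernel ?G (BijGroup Y) \<phi>"
  interpret \<phi>: group_hom ?G "BijGroup Y" \<phi>
    using act by (rule group_action.group_hom)
  have M: "M \<lhd> ?G" using min by (simp add: minimal_normal_def)
  then have "M \<subseteq> G" using normal_imp_subgroup subgroup.subset by fastforce
  have "M \<inter> ?K \<lhd> ?G"
    by (rule \<phi>.G.normal_subgroup_intersect[OF M \<phi>.normal_kernel])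
  then have "M \<inter> ?K = {\<one>\<^bsub>BijGroup \<Omega>\<^esub>} \<or> M \<inter> ?K = M"
    using min by (simp add: minimal_normal_def)
  then show ?thesis
  proof
    assume "M \<inter> ?K = {\<one>\<^bsub>BijGroup \<Omega>\<^esub>}"
    moreover have "kernel (?G\<lparr>carrier := M\<rparr>) (BijGroup Y) \<phi> = M \<inter> ?K"
      using \<open>M \<subseteq> G\<close> unfolding kernel_def by auto
    ultimately have "kernel (?G\<lparr>carrier := M\<rparr>) (BijGroup Y) \<phi> = {\<one>\<^bsub>?G\<^esub>}"
      by simp
    then show ?thesis
      using \<phi>.inj_on_subgroup_iff_trivial_ker[OF normal_imp_subgroup[OF M]] by blast
  next
    assume "M \<inter> ?K = M"
    then show ?thesis by (auto simp: kernel_def)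
  qed
qed

section \<open>Partitions and Cartesian decompositions\<close>

lemma block_of_eq:
  assumes "partition_on \<Omega> \<Gamma>" and "\<gamma> \<in> \<Gamma>" and "x \<in> \<gamma>"
  shows "block_of \<Gamma> x = \<gamma>"
  unfolding block_of_def
proof (rule the_equality)
  show "\<gamma> \<in> \<Gamma> \<and> x \<in> \<gamma>" using assms by simp
  show "\<delta> = \<gamma>" if "\<delta> \<in> \<Gamma> \<and> x \<in> \<delta>" for \<delta>
    using that assms partition_onD2 by (fastforce simp: disjoint_def)
qed

lemma block_of_mem:
  assumes "partition_on \<Omega> \<Gamma>" and "x \<in> \<Omega>"
  shows "block_of \<Gamma> x \<in> \<Gamma>" and "x \<in> block_of \<Gamma> x"
proof -
  obtain \<gamma> where "\<gamma> \<in> \<Gamma>" "x \<in> \<gamma>" using assms partition_onD1 by blast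
  then show "block_of \<Gamma> x \<in> \<Gamma>" "x \<in> block_of \<Gamma> x"
    using block_of_eq[OF assms(1)] by simp_all
qed

lemma partition_on_part_img:
  assumes "g \<in> Bij \<Omega>" and "partition_on \<Omega> \<Gamma>"
  shows "partition_on \<Omega> (part_img g \<Gamma>)"
proof -
  have "partition_on (g ` \<Omega>) ((`) g ` \<Gamma> - {{}})"
    using assms by (intro partition_on_inj_image) (auto simp: Bij_def bij_betw_def)
  moreover have "g ` \<Omega> = \<Omega>" using assms(1) by (auto simp: Bij_def bij_betw_def)
  moreover have "{} \<notin> (`) g ` \<Gamma>" using partition_onD3[OF assms(2)] by auto
  ultimately show ?thesis by (simp add: part_img_def)
qed

lemma block_of_part_img:
  assumes "g \<in> Bij \<Omega>" and "partition_on \<Omega> \<Gamma>" and "x \<in> \<Omega>"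
  shows "block_of (part_img g \<Gamma>) (g x) = g ` block_of \<Gamma> x"
  using block_of_mem[OF assms(2,3)]
  by (intro block_of_eq[OF partition_on_part_img[OF assms(1,2)]]) (auto simp: part_img_def)

lemma image_block_of:
  assumes "partition_on \<Omega> \<Gamma>" and "part_img m \<Gamma> = \<Gamma>" and "\<omega> \<in> \<Omega>"
  shows "m ` block_of \<Gamma> \<omega> = block_of \<Gamma> (m \<omega>)"
proof -
  have "m ` block_of \<Gamma> \<omega> \<in> part_img m \<Gamma>"
    using block_of_mem(1)[OF assms(1,3)] by (simp add: part_img_def)
  then show ?thesis
    using assms(2) block_of_mem(2)[OF assms(1,3)] by (intro block_of_eq[OF assms(1), symmetric]) auto
qed

lemma card_part_img:
  assumes "g \<in> Bij \<Omega>" and "\<Union>\<Gamma> \<subseteq> \<Omega>"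
  shows "card (part_img g \<Gamma>) = card \<Gamma>"
proof -
  have inj: "inj_on g \<Omega>" using assms(1) by (simp add: Bij_def bij_betw_def)
  have "inj_on ((`) g) \<Gamma>"
  proof (rule inj_onI)
    fix \<gamma> \<delta> assume "\<gamma> \<in> \<Gamma>" "\<delta> \<in> \<Gamma>" "g ` \<gamma> = g ` \<delta>"
    then show "\<gamma> = \<delta>" using assms(2) inj_on_image_eq_iff[OF inj, of \<gamma> \<delta>] by blast
  qed
  then show ?thesis by (simp add: part_img_def card_image)
qed

lemma part_img_mult:
  assumes "f \<in> Bij \<Omega>" and "g \<in> Bij \<Omega>" and "\<Union>\<Gamma> \<subseteq> \<Omega>"
  shows "part_img (f \<otimes>\<^bsub>BijGroup \<Omega>\<^esub> g) \<Gamma> = part_img f (part_img g \<Gamma>)"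
proof -
  have "(f \<otimes>\<^bsub>BijGroup \<Omega>\<^esub> g) ` \<gamma> = f ` g ` \<gamma>" if "\<gamma> \<in> \<Gamma>" for \<gamma>
    using assms(3) that by (intro BijGroup_mult_image[OF assms(1,2)]) auto
  then have "(\<lambda>\<gamma>. (f \<otimes>\<^bsub>BijGroup \<Omega>\<^esub> g) ` \<gamma>) ` \<Gamma> = (\<lambda>\<gamma>. f ` g ` \<gamma>) ` \<Gamma>"
    by (rule image_cong[OF refl])
  then show ?thesis
    unfolding part_img_def image_image[of "(`) f" "(`) g" \<Gamma>] .
qed

lemma part_img_one:
  assumes "\<Union>\<Gamma> \<subseteq> \<Omega>"
  shows "part_img \<one>\<^bsub>BijGroup \<Omega>\<^esub> \<Gamma> = \<Gamma>"
proof -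
  have "(\<lambda>\<gamma>. \<one>\<^bsub>BijGroup \<Omega>\<^esub> ` \<gamma>) ` \<Gamma> = (\<lambda>\<gamma>. \<gamma>) ` \<Gamma>"
    using assms by (intro image_cong[OF refl] BijGroup_one_image) auto
  then show ?thesis by (simp add: part_img_def)
qed

lemma part_img_group_action:
  assumes G: "subgroup G (BijGroup \<Omega>)"
    and sub: "\<And>\<Gamma>. \<Gamma> \<in> Y \<Longrightarrow> \<Union>\<Gamma> \<subseteq> \<Omega>"
    and closed: "\<And>g \<Gamma>. g \<in> G \<Longrightarrow> \<Gamma> \<in> Y \<Longrightarrow> part_img g \<Gamma> \<in> Y"
  shows "group_action (BijGroup \<Omega>\<lparr>carrier := G\<rparr>) Y (\<lambda>g. restrict (part_img g) Y)"
proof (rule group_actionI)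
  show "group (BijGroup \<Omega>\<lparr>carrier := G\<rparr>)"
    using subgroup.subgroup_is_group[OF G group_BijGroup] .
  have "G \<subseteq> Bij \<Omega>" using subgroup.subset[OF G] by simp
  then show "part_img (g \<otimes>\<^bsub>BijGroup \<Omega>\<lparr>carrier := G\<rparr>\<^esub> h) \<Gamma> = part_img g (part_img h \<Gamma>)"
    if "g \<in> carrier (BijGroup \<Omega>\<lparr>carrier := G\<rparr>)" "h \<in> carrier (BijGroup \<Omega>\<lparr>carrier := G\<rparr>)" "\<Gamma> \<in> Y"
    for g h \<Gamma>
    using that sub part_img_mult[of g \<Omega> h \<Gamma>] \<open>G \<subseteq> Bij \<Omega>\<close> by (simp add: subsetD)
  show "part_img g \<Gamma> \<in> Y" if "g \<in> carrier (BijGroup \<Omega>\<lparr>carrier := G\<rparr>)" "\<Gamma> \<in> Y" for g \<Gamma>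
    using closed that by simp
  show "part_img \<one>\<^bsub>BijGroup \<Omega>\<lparr>carrier := G\<rparr>\<^esub> \<Gamma> = \<Gamma>" if "\<Gamma> \<in> Y" for \<Gamma>
    using part_img_one[OF sub[OF that]] by simp
qed

lemma cart_decomp_partitions: "cart_decomp \<Omega> E \<Longrightarrow> \<Gamma> \<in> E \<Longrightarrow> partition_on \<Omega> \<Gamma>"
  by (simp add: cart_decomp_def)

lemma bij_betw_cart_decomp_blocks:
  assumes cd: "cart_decomp \<Omega> E"
  shows "bij_betw (\<lambda>\<alpha>. \<lambda>\<Gamma>\<in>E. block_of \<Gamma> \<alpha>) \<Omega> (\<Pi>\<^sub>E \<Gamma>\<in>E. \<Gamma>)"
proof (rule bij_betw_imageI)
  have parts: "\<And>\<Gamma>. \<Gamma> \<in> E \<Longrightarrow> partition_on \<Omega> \<Gamma>" using cd by (rule cart_decomp_partitions)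
  have single: "card (\<Inter>\<Gamma>\<in>E. f \<Gamma>) = 1" if "\<forall>\<Gamma>\<in>E. f \<Gamma> \<in> \<Gamma>" for f
    using cd that by (simp add: cart_decomp_def)
  show "inj_on (\<lambda>\<alpha>. \<lambda>\<Gamma>\<in>E. block_of \<Gamma> \<alpha>) \<Omega>"
  proof (rule inj_onI)
    fix \<alpha> \<beta> assume "\<alpha> \<in> \<Omega>" "\<beta> \<in> \<Omega>" and eq: "(\<lambda>\<Gamma>\<in>E. block_of \<Gamma> \<alpha>) = (\<lambda>\<Gamma>\<in>E. block_of \<Gamma> \<beta>)"
    have "block_of \<Gamma> \<alpha> = block_of \<Gamma> \<beta>" if "\<Gamma> \<in> E" for \<Gamma>
      using fun_cong[OF eq, of \<Gamma>] that by simp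
    then have "\<alpha> \<in> (\<Inter>\<Gamma>\<in>E. block_of \<Gamma> \<alpha>)" "\<beta> \<in> (\<Inter>\<Gamma>\<in>E. block_of \<Gamma> \<alpha>)"
      using block_of_mem(2)[OF parts] \<open>\<alpha> \<in> \<Omega>\<close> \<open>\<beta> \<in> \<Omega>\<close> by auto
    moreover have "card (\<Inter>\<Gamma>\<in>E. block_of \<Gamma> \<alpha>) = 1"
      by (rule single) (use block_of_mem(1)[OF parts \<open>\<alpha> \<in> \<Omega>\<close>] in blast)
    ultimately show "\<alpha> = \<beta>" by (metis card_1_singletonE singletonD)
  qed
  show "(\<lambda>\<alpha>. \<lambda>\<Gamma>\<in>E. block_of \<Gamma> \<alpha>) ` \<Omega> = (\<Pi>\<^sub>E \<Gamma>\<in>E. \<Gamma>)"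
  proof (intro equalityI subsetI)
    fix f assume "f \<in> (\<lambda>\<alpha>. \<lambda>\<Gamma>\<in>E. block_of \<Gamma> \<alpha>) ` \<Omega>"
    then show "f \<in> (\<Pi>\<^sub>E \<Gamma>\<in>E. \<Gamma>)" using block_of_mem(1)[OF parts] by auto
  next
    fix f assume f: "f \<in> (\<Pi>\<^sub>E \<Gamma>\<in>E. \<Gamma>)"
    then obtain \<alpha> where \<alpha>: "(\<Inter>\<Gamma>\<in>E. f \<Gamma>) = {\<alpha>}"
      using single[of f] by (auto simp: card_1_singleton_iff)
    obtain \<Gamma>0 where "\<Gamma>0 \<in> E" using cd by (fastforce simp: cart_decomp_def)
    have "\<alpha> \<in> f \<Gamma>0" "f \<Gamma>0 \<in> \<Gamma>0" using \<alpha> f \<open>\<Gamma>0 \<in> E\<close> by auto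
    then have "\<alpha> \<in> \<Omega>" using partition_onD1[OF parts[OF \<open>\<Gamma>0 \<in> E\<close>]] by blast
    have "f \<Gamma> = block_of \<Gamma> \<alpha>" if "\<Gamma> \<in> E" for \<Gamma>
      using block_of_eq[OF parts[OF that], of "f \<Gamma>" \<alpha>] f \<alpha> that by auto
    then have "f = (\<lambda>\<Gamma>\<in>E. block_of \<Gamma> \<alpha>)"
      using f by (intro extensionalityI[where A = E]) (auto simp: PiE_def)
    with \<open>\<alpha> \<in> \<Omega>\<close> show "f \<in> (\<lambda>\<alpha>. \<lambda>\<Gamma>\<in>E. block_of \<Gamma> \<alpha>) ` \<Omega>" by blast
  qed
qed

lemma finite_cart_decomp:
  assumes "finite \<Omega>" and "cart_decomp \<Omega> E"
  shows "finite E"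
proof -
  have "E \<subseteq> Pow (Pow \<Omega>)"
    using partition_onD1[OF cart_decomp_partitions[OF assms(2)]] by blast
  then show ?thesis using assms(1) finite_subset by blast
qed

lemma card_cart_decomp:
  assumes "finite \<Omega>" and "cart_decomp \<Omega> E"
  shows "card \<Omega> = (\<Prod>\<Gamma>\<in>E. card \<Gamma>)"
  using bij_betw_same_card[OF bij_betw_cart_decomp_blocks[OF assms(2)]]
    finite_cart_decomp[OF assms] by (simp add: card_PiE)

lemma power_dvd_card_cart_decomp:
  assumes "finite \<Omega>" and "cart_decomp \<Omega> E" and "F \<subseteq> E" and "\<And>\<Gamma>. \<Gamma> \<in> F \<Longrightarrow> card \<Gamma> = n"
  shows "n ^ card F dvd card \<Omega>"
proof -
  have "card \<Omega> = (\<Prod>\<Gamma>\<in>E - F. card \<Gamma>) * (\<Prod>\<Gamma>\<in>F. card \<Gamma>)"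
    using card_cart_decomp[OF assms(1,2)] prod.subset_diff[OF assms(3) finite_cart_decomp[OF assms(1,2)]]
    by simp
  also have "(\<Prod>\<Gamma>\<in>F. card \<Gamma>) = n ^ card F" using assms(4) by simp
  finally show ?thesis by simp
qed

section \<open>Stabilisers of blocks\<close>

lemma conj_set_eq_if_normal:
  assumes G: "subgroup G (BijGroup \<Omega>)" and M: "M \<lhd> BijGroup \<Omega>\<lparr>carrier := G\<rparr>" and g: "g \<in> G"
  shows "conj_set \<Omega> g M = M"
proof -
  interpret B: group "BijGroup \<Omega>" by (rule group_BijGroup)
  interpret M: normal M "BijGroup \<Omega>\<lparr>carrier := G\<rparr>" by (rule M)
  have "M \<subseteq> G" using M.subset by simp
  then have carrier: "g \<in> carrier (BijGroup \<Omega>)" "M \<subseteq> carrier (BijGroup \<Omega>)"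
    using g subgroup.subset[OF G] by auto
  have inv: "inv\<^bsub>BijGroup \<Omega>\<lparr>carrier := G\<rparr>\<^esub> g = inv\<^bsub>BijGroup \<Omega>\<^esub> g"
    by (rule B.m_inv_consistent[OF G g])
  show ?thesis
    unfolding conj_set_def
  proof (intro equalityI subsetI)
    fix h assume "h \<in> (\<lambda>k. g \<otimes>\<^bsub>BijGroup \<Omega>\<^esub> k \<otimes>\<^bsub>BijGroup \<Omega>\<^esub> inv\<^bsub>BijGroup \<Omega>\<^esub> g) ` M"
    then show "h \<in> M" using M.inv_op_closed2[of g] g inv by auto
  next
    fix h assume h: "h \<in> M"
    have "inv\<^bsub>BijGroup \<Omega>\<^esub> g \<otimes>\<^bsub>BijGroup \<Omega>\<^esub> h \<otimes>\<^bsub>BijGroup \<Omega>\<^esub> g \<in> M"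
      using M.inv_op_closed1[OF _ h, of g] g inv by simp
    moreover have "h = g \<otimes>\<^bsub>BijGroup \<Omega>\<^esub> (inv\<^bsub>BijGroup \<Omega>\<^esub> g \<otimes>\<^bsub>BijGroup \<Omega>\<^esub> h \<otimes>\<^bsub>BijGroup \<Omega>\<^esub> g)
        \<otimes>\<^bsub>BijGroup \<Omega>\<^esub> inv\<^bsub>BijGroup \<Omega>\<^esub> g"
      using B.conjugation_is_surj carrier h by auto
    ultimately show "h \<in> (\<lambda>k. g \<otimes>\<^bsub>BijGroup \<Omega>\<^esub> k \<otimes>\<^bsub>BijGroup \<Omega>\<^esub> inv\<^bsub>BijGroup \<Omega>\<^esub> g) ` M"
      by blast
  qed
qed

lemma set_stab_image_conj:
  assumes g: "g \<in> Bij \<Omega>" and M: "M \<subseteq> Bij \<Omega>" and normalises: "conj_set \<Omega> g M = M" and \<gamma>: "\<gamma> \<subseteq> \<Omega>"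
  shows "set_stab M (g ` \<gamma>) = conj_set \<Omega> g (set_stab M \<gamma>)"
proof -
  have inj: "inj_on g \<Omega>" using g by (simp add: Bij_def bij_betw_def)
  have stab_iff: "(g \<otimes>\<^bsub>BijGroup \<Omega>\<^esub> k \<otimes>\<^bsub>BijGroup \<Omega>\<^esub> inv\<^bsub>BijGroup \<Omega>\<^esub> g) ` g ` \<gamma> = g ` \<gamma> \<longleftrightarrow> k ` \<gamma> = \<gamma>"
    if "k \<in> M" for k
  proof -
    have "k \<in> Bij \<Omega>" using M that by blast
    then have "k ` \<gamma> \<subseteq> \<Omega>" using \<gamma> by (rule Bij_image_subset)
    then show ?thesis
      using BijGroup_conj_image[OF g \<open>k \<in> Bij \<Omega>\<close> \<gamma>] inj_on_image_eq_iff[OF inj _ \<gamma>] by simp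
  qed
  show ?thesis
  proof (intro equalityI subsetI)
    fix h assume h: "h \<in> set_stab M (g ` \<gamma>)"
    then have "h \<in> conj_set \<Omega> g M" using normalises by (simp add: set_stab_def)
    then obtain k where "k \<in> M" "h = g \<otimes>\<^bsub>BijGroup \<Omega>\<^esub> k \<otimes>\<^bsub>BijGroup \<Omega>\<^esub> inv\<^bsub>BijGroup \<Omega>\<^esub> g"
      by (auto simp: conj_set_def)
    then show "h \<in> conj_set \<Omega> g (set_stab M \<gamma>)"
      using h stab_iff by (auto simp: set_stab_def conj_set_def)
  next
    fix h assume "h \<in> conj_set \<Omega> g (set_stab M \<gamma>)"
    then obtain k where "k \<in> set_stab M \<gamma>" "h = g \<otimes>\<^bsub>BijGroup \<Omega>\<^esub> k \<otimes>\<^bsub>BijGroup \<Omega>\<^esub> inv\<^bsub>BijGroup \<Omega>\<^esub> g"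
      by (auto simp: conj_set_def)
    then show "h \<in> set_stab M (g ` \<gamma>)"
      using stab_iff normalises by (auto simp: set_stab_def conj_set_def)
  qed
qed

lemma set_stab_block_of_part_img:
  assumes G: "subgroup G (BijGroup \<Omega>)" and M: "M \<lhd> BijGroup \<Omega>\<lparr>carrier := G\<rparr>"
    and g: "g \<in> point_stab G \<omega>" and \<Gamma>: "partition_on \<Omega> \<Gamma>" and \<omega>: "\<omega> \<in> \<Omega>"
  shows "set_stab M (block_of (part_img g \<Gamma>) \<omega>) = conj_set \<Omega> g (set_stab M (block_of \<Gamma> \<omega>))"
proof -
  have "g \<in> G" "g \<omega> = \<omega>" using g by (auto simp: point_stab_def)
  have G_Bij: "G \<subseteq> Bij \<Omega>" using subgroup.subset[OF G] by simp
  have "M \<subseteq> G" using normal_imp_subgroup[OF M] subgroup.subset by fastforce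
  have "g \<in> Bij \<Omega>" and "M \<subseteq> Bij \<Omega>" using G_Bij \<open>g \<in> G\<close> \<open>M \<subseteq> G\<close> by auto
  have "block_of (part_img g \<Gamma>) \<omega> = g ` block_of \<Gamma> \<omega>"
    using block_of_part_img[OF \<open>g \<in> Bij \<Omega>\<close> \<Gamma> \<omega>] \<open>g \<omega> = \<omega>\<close> by simp
  moreover have "block_of \<Gamma> \<omega> \<subseteq> \<Omega>"
    using block_of_mem(1)[OF \<Gamma> \<omega>] partition_onD1[OF \<Gamma>] by blast
  ultimately show ?thesis
    using set_stab_image_conj[OF \<open>g \<in> Bij \<Omega>\<close> \<open>M \<subseteq> Bij \<Omega>\<close> conj_set_eq_if_normal[OF G M \<open>g \<in> G\<close>]]
    by simp
qed

lemma block_of_eq_orbit_set_stab: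
  assumes \<Gamma>: "partition_on \<Omega> \<Gamma>" and trans: "transitive_on \<Omega> M"
    and fixed: "\<forall>m\<in>M. part_img m \<Gamma> = \<Gamma>" and \<omega>: "\<omega> \<in> \<Omega>"
  shows "block_of \<Gamma> \<omega> = (\<lambda>m. m \<omega>) ` set_stab M (block_of \<Gamma> \<omega>)"
proof (intro equalityI subsetI)
  fix x assume x: "x \<in> block_of \<Gamma> \<omega>"
  then have "x \<in> \<Omega>" using block_of_mem(1)[OF \<Gamma> \<omega>] partition_onD1[OF \<Gamma>] by blast
  then obtain m where m: "m \<in> M" "m \<omega> = x" using trans \<omega> by (auto simp: transitive_on_def)
  have "m ` block_of \<Gamma> \<omega> = block_of \<Gamma> x"
    using image_block_of[OF \<Gamma> _ \<omega>] fixed m by simp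
  also have "\<dots> = block_of \<Gamma> \<omega>"
    using block_of_eq[OF \<Gamma> block_of_mem(1)[OF \<Gamma> \<omega>] x] .
  finally show "x \<in> (\<lambda>m. m \<omega>) ` set_stab M (block_of \<Gamma> \<omega>)"
    using m by (auto simp: set_stab_def)
next
  fix x assume "x \<in> (\<lambda>m. m \<omega>) ` set_stab M (block_of \<Gamma> \<omega>)"
  then show "x \<in> block_of \<Gamma> \<omega>" using block_of_mem(2)[OF \<Gamma> \<omega>] by (auto simp: set_stab_def)
qed

lemma partition_eq_image_block_of:
  assumes \<Gamma>: "partition_on \<Omega> \<Gamma>" and trans: "transitive_on \<Omega> M"
    and fixed: "\<forall>m\<in>M. part_img m \<Gamma> = \<Gamma>" and \<omega>: "\<omega> \<in> \<Omega>"
  shows "\<Gamma> = (\<lambda>m. m ` block_of \<Gamma> \<omega>) ` M"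
proof (intro equalityI subsetI)
  fix \<delta> assume \<delta>: "\<delta> \<in> \<Gamma>"
  then obtain x where x: "x \<in> \<delta>" using partition_onD3[OF \<Gamma>] by fastforce
  then have "x \<in> \<Omega>" using \<delta> partition_onD1[OF \<Gamma>] by blast
  then obtain m where m: "m \<in> M" "m \<omega> = x" using trans \<omega> by (auto simp: transitive_on_def)
  have "m ` block_of \<Gamma> \<omega> = block_of \<Gamma> x"
    using image_block_of[OF \<Gamma> _ \<omega>] fixed m by simp
  also have "\<dots> = \<delta>" using block_of_eq[OF \<Gamma> \<delta> x] .
  finally show "\<delta> \<in> (\<lambda>m. m ` block_of \<Gamma> \<omega>) ` M" using m by blast
next
  fix \<delta> assume "\<delta> \<in> (\<lambda>m. m ` block_of \<Gamma> \<omega>) ` M"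
  then obtain m where m: "m \<in> M" "\<delta> = m ` block_of \<Gamma> \<omega>" by blast
  have "m ` block_of \<Gamma> \<omega> \<in> part_img m \<Gamma>"
    using block_of_mem(1)[OF \<Gamma> \<omega>] by (simp add: part_img_def)
  then show "\<delta> \<in> \<Gamma>" using fixed m by simp
qed

lemma inj_on_set_stab_block_of:
  assumes parts: "\<And>\<Gamma>. \<Gamma> \<in> E \<Longrightarrow> partition_on \<Omega> \<Gamma>" and trans: "transitive_on \<Omega> M"
    and fixed: "\<forall>m\<in>M. \<forall>\<Gamma>\<in>E. part_img m \<Gamma> = \<Gamma>" and \<omega>: "\<omega> \<in> \<Omega>"
  shows "inj_on (\<lambda>\<Gamma>. set_stab M (block_of \<Gamma> \<omega>)) E"
proof (rule inj_on_inverseI)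
  fix \<Gamma> assume "\<Gamma> \<in> E"
  then show "(\<lambda>S. (\<lambda>m. m ` (\<lambda>k. k \<omega>) ` S) ` M) (set_stab M (block_of \<Gamma> \<omega>)) = \<Gamma>"
    using block_of_eq_orbit_set_stab[OF parts trans _ \<omega>] partition_eq_image_block_of[OF parts trans _ \<omega>] fixed
    by simp
qed

section \<open>The plinth fixes every invariant Cartesian decomposition\<close>

lemma innately_transitive_plinthD:
  assumes "innately_transitive_plinth \<Omega> G M"
  shows "subgroup G (BijGroup \<Omega>)" and "minimal_normal \<Omega> G M" and "M \<lhd> BijGroup \<Omega>\<lparr>carrier := G\<rparr>"
    and "transitive_on \<Omega> M" and "subgroup M (BijGroup \<Omega>)"
proof -
  show G: "subgroup G (BijGroup \<Omega>)" and "minimal_normal \<Omega> G M" and M: "M \<lhd> BijGroup \<Omega>\<lparr>carrier := G\<rparr>"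
    and "transitive_on \<Omega> M"
    using assms by (simp_all add: innately_transitive_plinth_def perm_group_def minimal_normal_def)
  show "subgroup M (BijGroup \<Omega>)"
    using group.incl_subgroup[OF group_BijGroup G normal_imp_subgroup[OF M]] .
qed

lemma part_img_orbit_CD:
  assumes G: "subgroup G (BijGroup \<Omega>)" and E: "E \<in> CD \<Omega> G" and \<Gamma>0: "\<Gamma>0 \<in> E"
  shows "\<Gamma>0 \<in> (\<lambda>g. part_img g \<Gamma>0) ` G" and "(\<lambda>g. part_img g \<Gamma>0) ` G \<subseteq> E"
    and "\<And>g \<Gamma>. g \<in> G \<Longrightarrow> \<Gamma> \<in> (\<lambda>g. part_img g \<Gamma>0) ` G \<Longrightarrow> part_img g \<Gamma> \<in> (\<lambda>g. part_img g \<Gamma>0) ` G"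
proof -
  have G_Bij: "G \<subseteq> Bij \<Omega>" using subgroup.subset[OF G] by simp
  have sub: "\<Union>\<Gamma>0 \<subseteq> \<Omega>" using E \<Gamma>0 by (auto simp: CD_def cart_decomp_def partition_on_def)
  then have "part_img \<one>\<^bsub>BijGroup \<Omega>\<^esub> \<Gamma>0 = \<Gamma>0" by (rule part_img_one)
  then show "\<Gamma>0 \<in> (\<lambda>g. part_img g \<Gamma>0) ` G"
    using subgroup.one_closed[OF G] by (metis image_eqI)
  show "(\<lambda>g. part_img g \<Gamma>0) ` G \<subseteq> E" using E \<Gamma>0 by (auto simp: CD_def)
  fix g \<Gamma> assume "g \<in> G" "\<Gamma> \<in> (\<lambda>g. part_img g \<Gamma>0) ` G"
  then obtain h where "h \<in> G" "\<Gamma> = part_img h \<Gamma>0" by blast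
  then have "part_img g \<Gamma> = part_img (g \<otimes>\<^bsub>BijGroup \<Omega>\<^esub> h) \<Gamma>0"
    using part_img_mult[OF _ _ sub] G_Bij \<open>g \<in> G\<close> by auto
  then show "part_img g \<Gamma> \<in> (\<lambda>g. part_img g \<Gamma>0) ` G"
    using subgroup.m_closed[OF G \<open>g \<in> G\<close> \<open>h \<in> G\<close>] by simp
qed

lemma minimal_normal_order_dvd_fact:
  assumes G: "subgroup G (BijGroup \<Omega>)" and min: "minimal_normal \<Omega> G M" and "finite F"
    and sub: "\<And>\<Gamma>. \<Gamma> \<in> F \<Longrightarrow> \<Union>\<Gamma> \<subseteq> \<Omega>"
    and closed: "\<And>g \<Gamma>. g \<in> G \<Longrightarrow> \<Gamma> \<in> F \<Longrightarrow> part_img g \<Gamma> \<in> F"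
    and "\<Gamma>0 \<in> F" and "m0 \<in> M" and moved: "part_img m0 \<Gamma>0 \<noteq> \<Gamma>0"
  shows "card M dvd fact (card F)"
proof -
  interpret F: group_action "BijGroup \<Omega>\<lparr>carrier := G\<rparr>" F "\<lambda>g. restrict (part_img g) F"
    by (rule part_img_group_action[OF G sub closed])
  have "restrict (part_img m0) F \<noteq> \<one>\<^bsub>BijGroup F\<^esub>"
    using moved \<open>\<Gamma>0 \<in> F\<close> by (auto simp: BijGroup_def dest: fun_cong[where x = \<Gamma>0])
  then have "inj_on (\<lambda>g. restrict (part_img g) F) M"
    using minimal_normal_action_trivial_or_faithful[OF min F.group_action_axioms] \<open>m0 \<in> M\<close> by blast
  moreover have "subgroup M (BijGroup \<Omega>\<lparr>carrier := G\<rparr>)"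
    using min by (simp add: minimal_normal_def normal_imp_subgroup)
  ultimately show ?thesis using F.card_dvd_fact_card_if_inj[OF \<open>finite F\<close>] by blast
qed

lemma cd_kernel_plinth:
  assumes fin: "finite \<Omega>" and itp: "innately_transitive_plinth \<Omega> G M" and E: "E \<in> CD \<Omega> G"
  shows "cd_kernel M E = M"
proof (rule ccontr)
  assume "cd_kernel M E \<noteq> M"
  then obtain m0 \<Gamma>0 where "m0 \<in> M" and \<Gamma>0: "\<Gamma>0 \<in> E" and moved: "part_img m0 \<Gamma>0 \<noteq> \<Gamma>0"
    by (auto simp: cd_kernel_def)
  define Orb where "Orb = (\<lambda>g. part_img g \<Gamma>0) ` G"
  note plinth = innately_transitive_plinthD[OF itp]
  note orbit = part_img_orbit_CD[OF plinth(1) E \<Gamma>0, folded Orb_def]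
  have cd: "cart_decomp \<Omega> E" using E by (simp add: CD_def)
  have \<Gamma>0_part: "partition_on \<Omega> \<Gamma>0" using cart_decomp_partitions[OF cd \<Gamma>0] .
  have "finite Orb" using orbit(2) finite_cart_decomp[OF fin cd] finite_subset by blast
  then have "0 < card Orb" using orbit(1) by (auto simp: card_gt_0_iff)
  have "card M dvd fact (card Orb)"
  proof (rule minimal_normal_order_dvd_fact[OF plinth(1,2) \<open>finite Orb\<close> _ orbit(3)])
    show "\<Union>\<Gamma> \<subseteq> \<Omega>" if "\<Gamma> \<in> Orb" for \<Gamma>
      using that orbit(2) partition_onD1[OF cart_decomp_partitions[OF cd]] by blast
  qed (use orbit(1) \<open>m0 \<in> M\<close> moved in auto)
  have "card \<Gamma>0 ^ card Orb dvd card \<Omega>"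
  proof (rule power_dvd_card_cart_decomp[OF fin cd orbit(2)])
    show "card \<Gamma> = card \<Gamma>0" if "\<Gamma> \<in> Orb" for \<Gamma>
      using that card_part_img[of _ \<Omega> \<Gamma>0] subgroup.subset[OF plinth(1)] partition_onD1[OF \<Gamma>0_part]
      by (auto simp: Orb_def)
  qed
  also have "card \<Omega> dvd card M"
  proof (rule card_dvd_card_if_transitive[OF plinth(5,4)])
    show "\<Omega> \<noteq> {}" using moved partition_onD1[OF \<Gamma>0_part] partition_onD3[OF \<Gamma>0_part]
      by (auto simp: part_img_def)
  qed
  finally have "card \<Gamma>0 ^ card Orb dvd fact (card Orb)"
    using \<open>card M dvd fact (card Orb)\<close> by (rule dvd_trans)
  moreover have "card \<Gamma>0 \<noteq> 1"
  proof
    assume "card \<Gamma>0 = 1"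
    then have "\<Gamma>0 = {\<Omega>}" using partition_onD1[OF \<Gamma>0_part] by (auto simp: card_1_singleton_iff)
    moreover have "m0 ` \<Omega> = \<Omega>"
      using \<open>m0 \<in> M\<close> subgroup.subset[OF plinth(5)] by (auto simp: Bij_def bij_betw_def)
    ultimately show False using moved by (simp add: part_img_def)
  qed
  then obtain p where p: "Factorial_Ring.prime p" "p dvd card \<Gamma>0" using prime_factor_nat by blast
  ultimately show False
    using prime_power_not_dvd_fact[OF p(1) \<open>0 < card Orb\<close>] dvd_trans[OF dvd_power_same[OF p(2)]] by blast
qed

theorem lemma2p3:
  fixes \<Omega> :: "'a set" and G M :: "('a \<Rightarrow> 'a) set" and \<omega> :: 'a and E :: "'a set set set"
  assumes "finite \<Omega>"
    and "innately_transitive_plinth \<Omega> G M"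
    and "\<omega> \<in> \<Omega>"
    and "E \<in> CD \<Omega> G"
  shows "cd_kernel M E = M
    \<and> (\<forall>g\<in>point_stab G \<omega>. conj_set \<Omega> g ` cart_system M \<omega> E = cart_system M \<omega> E)
    \<and> (\<exists>\<phi>. bij_betw \<phi> E (cart_system M \<omega> E) \<and>
          (\<forall>g\<in>point_stab G \<omega>. \<forall>\<Gamma>\<in>E. \<phi> (part_img g \<Gamma>) = conj_set \<Omega> g (\<phi> \<Gamma>)))"
proof -
  note plinth = innately_transitive_plinthD[OF assms(2)]
  have parts: "\<And>\<Gamma>. \<Gamma> \<in> E \<Longrightarrow> partition_on \<Omega> \<Gamma>"
    using assms(4) by (simp add: CD_def cart_decomp_def)
  have invariant: "part_img g ` E = E" if "g \<in> point_stab G \<omega>" for g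
    using assms(4) that by (simp add: CD_def point_stab_def)
  have kernel: "cd_kernel M E = M" using cd_kernel_plinth[OF assms(1,2,4)] .
  define \<phi> where "\<phi> \<Gamma> = set_stab M (block_of \<Gamma> \<omega>)" for \<Gamma>
  have system: "cart_system M \<omega> E = \<phi> ` E" by (simp add: cart_system_def \<phi>_def)
  have equivariant: "\<forall>g\<in>point_stab G \<omega>. \<forall>\<Gamma>\<in>E. \<phi> (part_img g \<Gamma>) = conj_set \<Omega> g (\<phi> \<Gamma>)"
    using set_stab_block_of_part_img[OF plinth(1,3) _ parts assms(3)] by (simp add: \<phi>_def)
  have "inj_on \<phi> E"
    using inj_on_set_stab_block_of[OF parts plinth(4) _ assms(3)] kernel
    unfolding \<phi>_def cd_kernel_def by blast
  then have bij: "bij_betw \<phi> E (cart_system M \<omega> E)" by (simp add: bij_betw_def system)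
  have "conj_set \<Omega> g ` cart_system M \<omega> E = cart_system M \<omega> E" if "g \<in> point_stab G \<omega>" for g
  proof -
    have "conj_set \<Omega> g ` \<phi> ` E = \<phi> ` part_img g ` E"
      using equivariant that by (simp add: image_image)
    then show ?thesis using invariant[OF that] by (simp add: system)
  qed
  then show ?thesis using kernel equivariant bij by blast
qed

end
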